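(* Let $(b_n)_{n=0}^\infty$ be a sequence with $b_n>0$, $b_0=1$ and $b_{n+1}/b_n\ge b$ for all $n$, for some $b>1$. Fix $C>0$. Then for every $\epsilon_0>0$ there is $\delta_0>0$ such that the following holds for every $\delta\in(0,\delta_0)$: if $A\subseteq[0,1]^2$ can be covered by $N\le C/\delta$ squares with horizontal and vertical sides of length $\delta$, then there exist $\gamma$ with $0<\gamma<\min\{1,\tfrac1b+\epsilon_0\}$ and $\tilde C>0$ such that for every sequence $\underline{\Theta}=(\underline{\theta_1},\underline{\theta_2},\dots)$ with $\underline{\theta_j}\in\mathbb{R}^2$ and every $n>0$, $$\mathcal{L}(\mathcal{A}_n(\underline{\Theta}))<\tilde C\gamma^n.$$
   Context: $\mathcal{L}$ denotes Lebesgue measure on $\mathbb{R}^2$. For $A\subseteq[0,1]^2$ let $\mathcal{A}=\bigcup_{n,m\in\mathbb{Z}}(A+(n,m))$. For $j\ge1$ and $\underline{\theta_j}\in\mathbb{R}^2$ let $\frac{\mathcal{A}-\underline{\theta_j}}{b_j}=\{(x,y): (b_jx,b_jy)+\underline{\theta_j}\in\mathcal{A}\}$, and define $$\mathcal{A}_n(\underline{\Theta})=[0,1]^2\cap\mathcal{A}\cap\frac{\mathcal{A}-\underline{\theta_1}}{b_1}\cap\frac{\mathcal{A}-\underline{\theta_2}}{b_2}\cap\dots\cap\frac{\mathcal{A}-\underline{\theta_n}}{b_n}.$$ *)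

theory Defs
  imports "HOL-Analysis.Analysis"
begin

definition periodize :: "(real \<times> real) set \<Rightarrow> (real \<times> real) set" where
  "periodize A = (\<Union>n::int. \<Union>m::int. (\<lambda>p. p + (of_int n, of_int m)) ` A)"

definition scaled_shift :: "(real \<times> real) set \<Rightarrow> real \<Rightarrow> real \<times> real \<Rightarrow> (real \<times> real) set" where
  "scaled_shift S c \<theta> = {(x, y). (c * x, c * y) + \<theta> \<in> S}"

definition A_n :: "(real \<times> real) set \<Rightarrow> (nat \<Rightarrow> real) \<Rightarrow> (nat \<Rightarrow> real \<times> real) \<Rightarrow> nat \<Rightarrow> (real \<times> real) set" where
  "A_n A b \<Theta> n = ({0..1} \<times> {0..1}) \<inter> periodize A \<inter>
      (\<Inter>j\<in>{1..n}. scaled_shift (periodize A) (b j) (\<Theta> j))"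

definition covered_by_squares :: "(real \<times> real) set \<Rightarrow> real \<Rightarrow> nat \<Rightarrow> bool" where
  "covered_by_squares A \<delta> N \<longleftrightarrow> (\<exists>P :: (real \<times> real) set. finite P \<and> card P \<le> N \<and>
      A \<subseteq> (\<Union>p\<in>P. {fst p .. fst p + \<delta>} \<times> {snd p .. snd p + \<delta>}))"

text \<open>Lebesgue (outer) measure on the plane; agrees with Lebesgue measure on measurable sets.\<close>
definition leb2 :: "(real \<times> real) set \<Rightarrow> real" where
  "leb2 S = (INF T\<in>{T. T \<in> sets lebesgue \<and> S \<subseteq> T \<and> emeasure lebesgue T < \<infinity>}. measure lebesgue T)"

end

theory Submission
  imports Defs
begin

text \<open>Only the coarse scales \<open>b(K), b(2K), \<dots>\<close> are used, with \<open>K\<close> the least exponent such that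
  \<open>bb^K \<ge> 2/\<delta>\<close>, so that \<open>b((i+1)K) / b(iK) \<ge> 2/\<delta>\<close>. If the intersection
  over the first \<open>i\<close> coarse scales is covered by squares of side \<open>s = \<delta>/b(iK)\<close>, intersecting with the
  next rescaled copy of the periodized set replaces each of them by at most
  \<open>N (c s + 2)^2 \<le> 4 N (c s)^2\<close> squares of side \<open>\<delta>/c\<close>, \<open>c = b((i+1)K)\<close>. So the covered area is
  multiplied by at most \<open>q = 4 N \<delta>^2 \<le> 4 C \<delta>\<close> per block of \<open>K\<close> indices, i.e. it decays like
  \<open>\<gamma>^n\<close> with \<open>\<gamma> = q^(1/K)\<close>. By minimality of \<open>K\<close>, \<open>\<delta>\<close> is comparable to \<open>bb^-K\<close>, so
  \<open>q < 8 C bb^(1-K)\<close> and \<open>\<gamma>\<close> tends to \<open>1/bb\<close> as \<open>\<delta> \<rightarrow> 0\<close>.\<close>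

definition square :: "real \<times> real \<Rightarrow> real \<Rightarrow> (real \<times> real) set" where
  "square p s = {fst p..fst p + s} \<times> {snd p..snd p + s}"

lemma square_eq_cbox: "square p s = cbox p (fst p + s, snd p + s)"
  by (cases p) (simp add: square_def cbox_Pair_eq)

lemma square_lmeasurable: "square p s \<in> lmeasurable"
  by (simp add: square_eq_cbox)

lemma measure_square: "s \<ge> 0 \<Longrightarrow> measure lebesgue (square p s) = s\<^sup>2"
  unfolding square_eq_cbox by (cases p) (simp add: content_Pair power2_eq_square)

lemma covered_by_squares_iff:
  "covered_by_squares A \<delta> N \<longleftrightarrow> (\<exists>P. finite P \<and> card P \<le> N \<and> A \<subseteq> (\<Union>p\<in>P. square p \<delta>))"
  by (simp add: covered_by_squares_def square_def)

lemma leb2_le_card_squares: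
  assumes "finite Q" "S \<subseteq> (\<Union>q\<in>Q. square q s)" "s \<ge> 0"
  shows "leb2 S \<le> real (card Q) * s\<^sup>2"
proof -
  define T where "T = (\<Union>q\<in>Q. square q s)"
  have "T \<in> lmeasurable"
    unfolding T_def using assms(1) by (intro fmeasurable.finite_UN) (auto simp: square_lmeasurable)
  then have "T \<in> {T. T \<in> sets lebesgue \<and> S \<subseteq> T \<and> emeasure lebesgue T < \<infinity>}"
    using assms(2) by (auto simp: T_def fmeasurable_def)
  then have "leb2 S \<le> measure lebesgue T"
    unfolding leb2_def by (intro cINF_lower) (auto intro: bdd_belowI[where m=0])
  also have "\<dots> \<le> (\<Sum>q\<in>Q. measure lebesgue (square q s))"
    unfolding T_def using assms(1) by (intro measure_UNION_le) (auto simp: square_lmeasurable fmeasurableD)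
  also have "\<dots> = real (card Q) * s\<^sup>2"
    using assms(3) by (simp add: measure_square)
  finally show ?thesis .
qed

lemma
  fixes u w :: real
  assumes "w \<ge> 0"
  shows finite_int_window: "finite {n::int. u \<le> n \<and> n \<le> u + w}"
    and card_int_window_le: "real (card {n::int. u \<le> n \<and> n \<le> u + w}) \<le> w + 1"
proof -
  have eq: "{n::int. u \<le> n \<and> n \<le> u + w} = {\<lceil>u\<rceil>..\<lfloor>u + w\<rfloor>}"
    by (auto simp: ceiling_le_iff le_floor_iff)
  show "finite {n::int. u \<le> n \<and> n \<le> u + w}"
    unfolding eq by simp
  have "real (nat (\<lfloor>u + w\<rfloor> - \<lceil>u\<rceil> + 1)) \<le> w + 1"
  proof (cases "\<lfloor>u + w\<rfloor> - \<lceil>u\<rceil> + 1 \<ge> 0")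
    case True
    then show ?thesis
      using of_int_floor_le[of "u + w"] le_of_int_ceiling[of u] by (simp; linarith)
  qed (use assms in simp)
  then show "real (card {n::int. u \<le> n \<and> n \<le> u + w}) \<le> w + 1"
    unfolding eq by simp
qed

lemma card_UN_UN_le:
  fixes F :: "'a \<Rightarrow> 'b \<Rightarrow> 'c set"
  assumes "finite P" "finite R" "card R \<le> N" "M \<ge> 0"
    and "\<And>p r. finite (F p r)" "\<And>p r. real (card (F p r)) \<le> M"
  shows "real (card (\<Union>p\<in>P. \<Union>r\<in>R. F p r)) \<le> real (card P) * real N * M"
proof -
  have "card (\<Union>p\<in>P. \<Union>r\<in>R. F p r) \<le> (\<Sum>p\<in>P. card (\<Union>r\<in>R. F p r))"
    by (rule card_UN_le[OF assms(1)])
  also have "\<dots> \<le> (\<Sum>p\<in>P. \<Sum>r\<in>R. card (F p r))"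
    by (intro sum_mono card_UN_le[OF assms(2)])
  finally have "card (\<Union>p\<in>P. \<Union>r\<in>R. F p r) \<le> (\<Sum>p\<in>P. \<Sum>r\<in>R. card (F p r))" .
  then have "real (card (\<Union>p\<in>P. \<Union>r\<in>R. F p r)) \<le> real (\<Sum>p\<in>P. \<Sum>r\<in>R. card (F p r))"
    by (simp only: of_nat_le_iff)
  also have "\<dots> = (\<Sum>p\<in>P. \<Sum>r\<in>R. real (card (F p r)))"
    by simp
  also have "\<dots> \<le> (\<Sum>p\<in>P. \<Sum>r\<in>R. M)"
    by (intro sum_mono assms(6))
  also have "\<dots> = real (card P) * real (card R) * M"
    by simp
  also have "\<dots> \<le> real (card P) * real N * M"
    using assms(3,4) by (intro mult_right_mono mult_left_mono) auto
  finally show ?thesis .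
qed

lemma rescaled_coordinate_bounds:
  fixes c x p s a a' t :: real and n :: int
  assumes "c > 0" "p \<le> x" "x \<le> p + s" "a \<le> a'" "a' \<le> a + \<delta>" "c * x + t = a' + n"
  shows "c * p - a + t - \<delta> \<le> n \<and> n \<le> c * p - a + t - \<delta> + (c * s + \<delta>)"
    and "(a + n - t) / c \<le> x \<and> x \<le> (a + n - t) / c + \<delta> / c"
proof -
  have "c * p \<le> c * x" "c * x \<le> c * p + c * s"
    using assms(1-3) mult_left_mono[of _ _ c] by (auto simp: distrib_left[symmetric])
  then show "c * p - a + t - \<delta> \<le> n \<and> n \<le> c * p - a + t - \<delta> + (c * s + \<delta>)"
    using assms(4-6) by linarith
  show "(a + n - t) / c \<le> x \<and> x \<le> (a + n - t) / c + \<delta> / c"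
    using assms(1,4-6) by (simp add: divide_le_eq le_divide_eq add_divide_distrib[symmetric] mult.commute)
qed

text \<open>A square of side \<open>s\<close> meets the rescaled copy of a translate \<open>square a \<delta> + (n, m)\<close> only for
  \<open>n, m\<close> in integer windows of length \<open>c s + \<delta>\<close>, and the relevant part of that copy is a square of
  side \<open>\<delta>/c\<close>.\<close>

lemma scaled_shift_periodize_cover:
  assumes PA: "finite PA" "card PA \<le> N" "A \<subseteq> (\<Union>a\<in>PA. square a \<delta>)"
    and \<delta>: "0 < \<delta>" "\<delta> \<le> 1" and c: "c > 0" and s: "s \<ge> 0"
    and P: "finite P" "X \<subseteq> (\<Union>p\<in>P. square p s)"
  shows "\<exists>Q. finite Q \<and> real (card Q) \<le> real (card P) * real N * (c * s + 2)\<^sup>2 \<and>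
    X \<inter> scaled_shift (periodize A) c \<theta> \<subseteq> (\<Union>q\<in>Q. square q (\<delta> / c))"
proof -
  define W where "W u = {n::int. u \<le> n \<and> n \<le> u + (c * s + \<delta>)}" for u
  define corner where
    "corner a = (\<lambda>(n::int, m::int). ((fst a + n - fst \<theta>) / c, (snd a + m - snd \<theta>) / c))" for a
  define J where
    "J p a = W (c * fst p - fst a + fst \<theta> - \<delta>) \<times> W (c * snd p - snd a + snd \<theta> - \<delta>)" for p a
  define Q where "Q = (\<Union>p\<in>P. \<Union>a\<in>PA. corner a ` J p a)"
  have cs: "c * s + \<delta> \<ge> 0"
    using c s \<delta> by simp
  have W: "finite (W u)" "real (card (W u)) \<le> c * s + 2" for u
  proof -
    show "finite (W u)"
      unfolding W_def by (rule finite_int_window[OF cs])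
    have "real (card (W u)) \<le> c * s + \<delta> + 1"
      unfolding W_def by (rule card_int_window_le[OF cs])
    then show "real (card (W u)) \<le> c * s + 2"
      using \<delta>(2) by linarith
  qed
  have J: "finite (J p a)" "real (card (J p a)) \<le> (c * s + 2)\<^sup>2" for p a
  proof -
    show "finite (J p a)"
      using W(1) by (simp add: J_def)
    have "0 \<le> c * s"
      using c s by simp
    then have "real (card (J p a)) \<le> (c * s + 2) * (c * s + 2)"
      unfolding J_def card_cartesian_product of_nat_mult by (intro mult_mono W(2)) auto
    then show "real (card (J p a)) \<le> (c * s + 2)\<^sup>2"
      by (simp add: power2_eq_square)
  qed
  have card_corners: "real (card (corner a ` J p a)) \<le> (c * s + 2)\<^sup>2" for p a
    using card_image_le[OF J(1), of "corner a" p a] J(2)[of p a] by linarith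
  have "finite Q"
    unfolding Q_def using P(1) PA(1) J(1) by auto
  moreover have "real (card Q) \<le> real (card P) * real N * (c * s + 2)\<^sup>2"
    unfolding Q_def using P(1) PA(1,2) J(1) card_corners by (intro card_UN_UN_le) auto
  moreover have "X \<inter> scaled_shift (periodize A) c \<theta> \<subseteq> (\<Union>q\<in>Q. square q (\<delta> / c))"
  proof
    fix z assume z: "z \<in> X \<inter> scaled_shift (periodize A) c \<theta>"
    obtain x y where zxy: "z = (x, y)"
      by (cases z)
    obtain p where p: "p \<in> P" "z \<in> square p s"
      using z P(2) by auto
    have "(c * x, c * y) + \<theta> \<in> periodize A"
      using z by (simp add: zxy scaled_shift_def)
    then obtain n m :: int and a' where a': "a' \<in> A" and eq: "(c * x, c * y) + \<theta> = a' + (n, m)"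
      unfolding periodize_def by auto
    obtain a where a: "a \<in> PA" "a' \<in> square a \<delta>"
      using a' PA(3) by auto
    have e: "c * x + fst \<theta> = fst a' + n" "c * y + snd \<theta> = snd a' + m"
      using eq by (auto simp: prod_eq_iff)
    have px: "fst p \<le> x" "x \<le> fst p + s" "snd p \<le> y" "y \<le> snd p + s"
      using p(2) by (auto simp: square_def zxy)
    have aa': "fst a \<le> fst a'" "fst a' \<le> fst a + \<delta>" "snd a \<le> snd a'" "snd a' \<le> snd a + \<delta>"
      using a(2) by (auto simp: square_def)
    note x_bounds = rescaled_coordinate_bounds[OF c px(1,2) aa'(1,2) e(1)]
      and y_bounds = rescaled_coordinate_bounds[OF c px(3,4) aa'(3,4) e(2)]
    have "(n, m) \<in> J p a"
      using x_bounds(1) y_bounds(1) by (simp add: J_def W_def)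
    then have "corner a (n, m) \<in> Q"
      unfolding Q_def by (intro UN_I[OF p(1)] UN_I[OF a(1)] imageI)
    moreover have "z \<in> square (corner a (n, m)) (\<delta> / c)"
      using x_bounds(2) y_bounds(2) by (simp add: square_def corner_def zxy)
    ultimately show "z \<in> (\<Union>q\<in>Q. square q (\<delta> / c))"
      by (rule UN_I)
  qed
  ultimately show ?thesis
    by blast
qed

primrec coarse_intersection ::
  "(real \<times> real) set \<Rightarrow> (nat \<Rightarrow> real) \<Rightarrow> (nat \<Rightarrow> real \<times> real) \<Rightarrow> nat \<Rightarrow> nat \<Rightarrow> (real \<times> real) set"
where
  "coarse_intersection A b \<Theta> K 0 = ({0..1} \<times> {0..1}) \<inter> periodize A"
| "coarse_intersection A b \<Theta> K (Suc i) = coarse_intersection A b \<Theta> K i \<inter>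
     scaled_shift (periodize A) (b (Suc i * K)) (\<Theta> (Suc i * K))"

lemma A_n_subset_coarse_intersection:
  assumes "K \<ge> 1" "i * K \<le> n"
  shows "A_n A b \<Theta> n \<subseteq> coarse_intersection A b \<Theta> K i"
  using assms(2)
proof (induction i)
  case 0
  then show ?case by (auto simp: A_n_def)
next
  case (Suc i)
  then have "Suc i * K \<in> {1..n}"
    using assms(1) by (simp add: Suc_le_eq)
  then show ?case
    using Suc by (auto simp: A_n_def)
qed

lemma ratio_power_growth:
  fixes b :: "nat \<Rightarrow> real"
  assumes "\<And>n. b n > 0" "bb \<ge> 0" "\<And>n. b (Suc n) / b n \<ge> bb"
  shows "b (m + k) \<ge> bb ^ k * b m"
proof (induction k)
  case 0
  then show ?case by simp
next
  case (Suc k)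
  have "bb * (bb ^ k * b m) \<le> bb * b (m + k)"
    using Suc assms(2) by (intro mult_left_mono)
  also have "\<dots> \<le> b (Suc (m + k))"
    using assms(3)[of "m + k"] assms(1)[of "m + k"] by (simp add: le_divide_eq)
  finally show ?case by simp
qed

lemma coarse_intersection_cover:
  fixes b :: "nat \<Rightarrow> real"
  assumes bpos: "\<And>n. b n > 0" and b0: "b 0 = 1"
    and PA: "finite PA" "card PA \<le> N" "A \<subseteq> (\<Union>a\<in>PA. square a \<delta>)"
    and \<delta>: "0 < \<delta>" "\<delta> \<le> 1"
    and spread: "\<And>i. 2 \<le> b (Suc i * K) * (\<delta> / b (i * K))"
    and q: "4 * real N * \<delta>\<^sup>2 \<le> q"
  shows "\<exists>Q. finite Q \<and> coarse_intersection A b \<Theta> K i \<subseteq> (\<Union>p\<in>Q. square p (\<delta> / b (i * K))) \<and>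
           real (card Q) * (\<delta> / b (i * K))\<^sup>2 \<le> 9 * real N * \<delta>\<^sup>2 * q ^ i"
proof (induction i)
  case 0
  \<comment> \<open>the unit square itself, seen at scale \<open>c = 1\<close>, gives the constant \<open>9 = (1 + 2)^2\<close>\<close>
  have "{0..1} \<times> {0..1} \<subseteq> (\<Union>p\<in>{(0, 0)}. square p 1)"
    by (simp add: square_def)
  moreover have "scaled_shift (periodize A) 1 (0, 0) = periodize A"
    by (auto simp: scaled_shift_def)
  ultimately obtain Q where "finite Q" "real (card Q) \<le> 9 * real N"
    "({0..1} \<times> {0..1}) \<inter> periodize A \<subseteq> (\<Union>q\<in>Q. square q \<delta>)"
    using scaled_shift_periodize_cover[OF PA \<delta>, of 1 1 "{(0, 0)}" "{0..1} \<times> {0..1}" "(0, 0)"]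
    by auto
  then show ?case
    by (auto simp: b0 intro!: exI[of _ Q] mult_right_mono)
next
  case (Suc i)
  define c where "c = b (Suc i * K)"
  define s where "s = \<delta> / b (i * K)"
  obtain Q where Q: "finite Q" "coarse_intersection A b \<Theta> K i \<subseteq> (\<Union>p\<in>Q. square p s)"
    "real (card Q) * s\<^sup>2 \<le> 9 * real N * \<delta>\<^sup>2 * q ^ i"
    using Suc s_def by blast
  have c: "c > 0" and s: "s \<ge> 0" and cs: "c * s \<ge> 2"
    using bpos \<delta> spread by (auto simp: c_def s_def less_imp_le)
  obtain Q' where Q': "finite Q'" "real (card Q') \<le> real (card Q) * real N * (c * s + 2)\<^sup>2"
    "coarse_intersection A b \<Theta> K i \<inter> scaled_shift (periodize A) c (\<Theta> (Suc i * K))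
       \<subseteq> (\<Union>q\<in>Q'. square q (\<delta> / c))"
    using scaled_shift_periodize_cover[OF PA \<delta> c s Q(1,2)] by blast
  have "0 \<le> q"
    by (rule order_trans[OF _ q]) simp
  have "(c * s + 2)\<^sup>2 \<le> (2 * (c * s))\<^sup>2"
    using cs by (intro power_mono) auto
  then have "real (card Q') * (\<delta> / c)\<^sup>2 \<le> real (card Q) * real N * (2 * (c * s))\<^sup>2 * (\<delta> / c)\<^sup>2"
    using Q'(2) by (meson mult_left_mono mult_right_mono of_nat_0_le_iff order_trans
        zero_le_mult_iff zero_le_power2)
  also have "\<dots> = (real (card Q) * s\<^sup>2) * (4 * real N * \<delta>\<^sup>2)"
    using c by (simp add: power_mult_distrib field_simps)
  also have "\<dots> \<le> (9 * real N * \<delta>\<^sup>2 * q ^ i) * q"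
    using \<open>0 \<le> q\<close> by (intro mult_mono[OF Q(3) q]) simp_all
  finally show ?case
    using Q'(1,3) by (auto simp: c_def mult_ac)
qed

lemma A_n_measure_le:
  fixes b :: "nat \<Rightarrow> real"
  assumes bpos: "\<And>n. b n > 0" and b0: "b 0 = 1"
    and cov: "covered_by_squares A \<delta> N" and \<delta>: "0 < \<delta>" "\<delta> \<le> 1" and K: "K \<ge> 1"
    and spread: "\<And>i. 2 \<le> b (Suc i * K) * (\<delta> / b (i * K))"
    and q: "4 * real N * \<delta>\<^sup>2 \<le> q" "0 < q" "q \<le> 1"
  shows "leb2 (A_n A b \<Theta> n) \<le> 9 / 4 * root K q ^ n"
proof -
  define i where "i = n div K"
  have "n mod K < K"
    using K by simp
  then have i: "i * K \<le> n" "n \<le> Suc i * K"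
    using div_mult_mod_eq[of n K] unfolding i_def mult_Suc by linarith+
  obtain PA where PA: "finite PA" "card PA \<le> N" "A \<subseteq> (\<Union>a\<in>PA. square a \<delta>)"
    using cov by (auto simp: covered_by_squares_iff)
  obtain Q where Q: "finite Q" "coarse_intersection A b \<Theta> K i \<subseteq> (\<Union>p\<in>Q. square p (\<delta> / b (i * K)))"
    "real (card Q) * (\<delta> / b (i * K))\<^sup>2 \<le> 9 * real N * \<delta>\<^sup>2 * q ^ i"
    using coarse_intersection_cover[OF bpos b0 PA \<delta> spread q(1)] by blast
  have "leb2 (A_n A b \<Theta> n) \<le> real (card Q) * (\<delta> / b (i * K))\<^sup>2"
    using A_n_subset_coarse_intersection[OF K i(1), of A b \<Theta>] Q(2) bpos[of "i * K"] \<delta>(1)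
    by (intro leb2_le_card_squares[OF Q(1)]) auto
  also have "\<dots> \<le> 9 * real N * \<delta>\<^sup>2 * q ^ i"
    by (rule Q(3))
  also have "\<dots> \<le> 9 / 4 * q * q ^ i"
    using q(1,2) by (intro mult_right_mono) auto
  also have "9 / 4 * q * q ^ i = 9 / 4 * (root K q ^ K) ^ Suc i"
    using K q(2) by (simp add: real_root_pow_pos2)
  also have "\<dots> = 9 / 4 * root K q ^ (Suc i * K)"
    by (simp only: power_mult[symmetric] mult.commute)
  also have "\<dots> \<le> 9 / 4 * root K q ^ n"
    using i(2) q K by (intro mult_left_mono power_decreasing) auto
  finally show ?thesis .
qed

lemma exists_least_power_le:
  fixes \<rho> x :: real
  assumes "0 < \<rho>" "\<rho> < 1" "0 < x" "x < \<rho> ^ K0"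
  shows "\<exists>K > K0. \<rho> ^ K \<le> x \<and> \<rho> * x < \<rho> ^ K"
proof -
  have ex: "\<exists>k. \<rho> ^ k \<le> x"
    using real_arch_pow_inv[OF assms(3,2)] by (auto intro: less_imp_le)
  define K where "K = (LEAST k. \<rho> ^ k \<le> x)"
  have K: "\<rho> ^ K \<le> x"
    unfolding K_def by (rule LeastI_ex[OF ex])
  have "K0 < K"
  proof (rule ccontr)
    assume "\<not> K0 < K"
    then have "\<rho> ^ K0 \<le> \<rho> ^ K"
      using assms(1,2) by (intro power_decreasing) auto
    then show False
      using K assms(4) by simp
  qed
  moreover have "x < \<rho> ^ (K - 1)"
    using not_less_Least[of "K - 1" "\<lambda>k. \<rho> ^ k \<le> x"] \<open>K0 < K\<close> by (simp add: K_def)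
  then have "\<rho> * x < \<rho> ^ K"
    using \<open>K0 < K\<close> assms(1) by (cases K) auto
  ultimately show ?thesis
    using K by blast
qed

lemma exists_scale:
  fixes bb \<beta> C :: real
  assumes bb: "bb > 1" and \<beta>: "1 / bb < \<beta>" and C: "C > 0"
  shows "\<exists>\<delta>0>0. \<delta>0 \<le> 1 \<and>
    (\<forall>\<delta>. 0 < \<delta> \<and> \<delta> < \<delta>0 \<longrightarrow> (\<exists>K\<ge>1. 2 \<le> bb ^ K * \<delta> \<and> 4 * C * \<delta> < \<beta> ^ K))"
proof -
  define \<rho> where "\<rho> = 1 / bb"
  have \<rho>: "0 < \<rho>" "\<rho> < 1" "1 < \<beta> / \<rho>"
    using bb \<beta> by (auto simp: \<rho>_def field_simps)
  obtain K0 where K0: "8 * C / \<rho> < (\<beta> / \<rho>) ^ K0"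
    using real_arch_pow[OF \<rho>(3)] by blast
  have scale: "2 \<le> bb ^ K * \<delta> \<and> 4 * C * \<delta> < \<beta> ^ K"
    if \<delta>: "0 < \<delta>" "\<delta> < 2 * \<rho> ^ K0" and K: "K0 < K" "\<rho> ^ K \<le> \<delta> / 2" "\<rho> * (\<delta> / 2) < \<rho> ^ K"
    for \<delta> K
  proof
    show "2 \<le> bb ^ K * \<delta>"
      using K(2) bb by (simp add: \<rho>_def power_one_over field_simps)
    have "(\<beta> / \<rho>) ^ K0 \<le> (\<beta> / \<rho>) ^ K"
      using K(1) \<rho>(3) by (intro power_increasing) auto
    with K0 have "8 * C / \<rho> < (\<beta> / \<rho>) ^ K"
      by simp
    then have "(\<rho> * (\<delta> / 2)) * (8 * C / \<rho>) < \<rho> ^ K * (\<beta> / \<rho>) ^ K"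
      using K(3) \<rho>(1) \<delta>(1) C by (intro mult_strict_mono) auto
    then show "4 * C * \<delta> < \<beta> ^ K"
      using \<rho>(1) by (simp add: power_divide field_simps)
  qed
  show ?thesis
  proof (intro exI[of _ "min 1 (2 * \<rho> ^ K0)"] conjI allI impI)
    fix \<delta> :: real
    assume \<delta>: "0 < \<delta> \<and> \<delta> < min 1 (2 * \<rho> ^ K0)"
    then obtain K where "K0 < K" "\<rho> ^ K \<le> \<delta> / 2" "\<rho> * (\<delta> / 2) < \<rho> ^ K"
      using exists_least_power_le[OF \<rho>(1,2), of "\<delta> / 2" K0] by auto
    then show "\<exists>K\<ge>1. 2 \<le> bb ^ K * \<delta> \<and> 4 * C * \<delta> < \<beta> ^ K"
      using scale[of \<delta> K] \<delta> by (intro exI[of _ K]) auto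
  qed (use \<rho>(1) in auto)
qed

lemma A_n_measure_decay:
  fixes b :: "nat \<Rightarrow> real"
  assumes bpos: "\<And>n. b n > 0" and b0: "b 0 = 1"
    and bb: "bb > 1" and ratio: "\<And>n. b (Suc n) / b n \<ge> bb"
    and cov: "covered_by_squares A \<delta> N" and N: "real N \<le> C / \<delta>" and C: "C > 0"
    and \<delta>: "0 < \<delta>" "\<delta> \<le> 1" and K: "K \<ge> 1" "2 \<le> bb ^ K * \<delta>"
    and \<beta>: "4 * C * \<delta> < \<beta> ^ K" "0 < \<beta>" "\<beta> \<le> 1"
  shows "\<exists>\<gamma>. 0 < \<gamma> \<and> \<gamma> < \<beta> \<and> (\<forall>\<Theta> n. leb2 (A_n A b \<Theta> n) < 3 * \<gamma> ^ n)"
proof (intro exI conjI allI)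
  define \<gamma> where "\<gamma> = root K (4 * C * \<delta>)"
  have spread: "2 \<le> b (Suc i * K) * (\<delta> / b (i * K))" for i
  proof -
    have "bb ^ K * b (i * K) \<le> b (Suc i * K)"
      using ratio_power_growth[where b = b and bb = bb and m = "i * K" and k = K] bpos ratio bb
      by (simp add: add.commute)
    then have "bb ^ K * \<delta> \<le> b (Suc i * K) * (\<delta> / b (i * K))"
      using bpos[of "i * K"] \<delta> by (simp add: field_simps mult_right_mono)
    then show ?thesis
      using K(2) by linarith
  qed
  have "\<beta> ^ K \<le> 1"
    using \<beta>(2,3) by (intro power_le_one) auto
  then have q: "4 * real N * \<delta>\<^sup>2 \<le> 4 * C * \<delta>" "0 < 4 * C * \<delta>" "4 * C * \<delta> \<le> 1"
    using N \<delta> \<beta>(1) C by (simp_all add: le_divide_eq power2_eq_square)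
  show "0 < \<gamma>"
    using K(1) C \<delta> by (simp add: \<gamma>_def)
  have "\<gamma> ^ K < \<beta> ^ K"
    using K(1) q(2) \<beta>(1) by (simp add: \<gamma>_def real_root_pow_pos2)
  then show "\<gamma> < \<beta>"
    by (rule power_less_imp_less_base) (use \<beta>(2) in simp)
  fix \<Theta> n
  have "leb2 (A_n A b \<Theta> n) \<le> 9 / 4 * \<gamma> ^ n"
    unfolding \<gamma>_def by (rule A_n_measure_le[OF bpos b0 cov \<delta> K(1) spread q])
  moreover have "0 < \<gamma> ^ n"
    using \<open>0 < \<gamma>\<close> by simp
  ultimately show "leb2 (A_n A b \<Theta> n) < 3 * \<gamma> ^ n"
    by linarith
qed

lemma uniform_decay:
  fixes b :: "nat \<Rightarrow> real"
  assumes bpos: "\<And>n. b n > 0" and b0: "b 0 = 1"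
    and bb: "bb > 1" and ratio: "\<And>n. b (Suc n) / b n \<ge> bb"
    and C: "C > 0" and \<beta>: "1 / bb < \<beta>" "\<beta> \<le> 1"
  shows "\<exists>\<delta>0>0. \<forall>\<delta>. 0 < \<delta> \<and> \<delta> < \<delta>0 \<longrightarrow> (\<forall>A N. real N \<le> C / \<delta> \<and> covered_by_squares A \<delta> N \<longrightarrow>
    (\<exists>\<gamma>. 0 < \<gamma> \<and> \<gamma> < \<beta> \<and> (\<forall>\<Theta> n. leb2 (A_n A b \<Theta> n) < 3 * \<gamma> ^ n)))"
proof -
  obtain \<delta>0 where \<delta>0: "\<delta>0 > 0" "\<delta>0 \<le> 1"
    and scale: "\<And>\<delta>. 0 < \<delta> \<and> \<delta> < \<delta>0 \<Longrightarrow> \<exists>K\<ge>1. 2 \<le> bb ^ K * \<delta> \<and> 4 * C * \<delta> < \<beta> ^ K"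
    using exists_scale[OF bb \<beta>(1) C] by blast
  have "0 < \<beta>"
    using bb \<beta>(1) by (smt (verit) divide_pos_pos)
  have "\<exists>\<gamma>. 0 < \<gamma> \<and> \<gamma> < \<beta> \<and> (\<forall>\<Theta> n. leb2 (A_n A b \<Theta> n) < 3 * \<gamma> ^ n)"
    if \<delta>: "0 < \<delta> \<and> \<delta> < \<delta>0" and N: "real N \<le> C / \<delta>" and cov: "covered_by_squares A \<delta> N"
    for \<delta> A N
  proof -
    obtain K where K: "K \<ge> 1" "2 \<le> bb ^ K * \<delta>" "4 * C * \<delta> < \<beta> ^ K"
      using scale[OF \<delta>] by blast
    have "0 < \<delta>" "\<delta> \<le> 1"
      using \<delta> \<delta>0(2) by auto
    then show ?thesis
      using A_n_measure_decay[OF bpos b0 bb ratio cov N C _ _ K \<open>0 < \<beta>\<close> \<beta>(2)] by blast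
  qed
  then show ?thesis
    using \<delta>0(1) by blast
qed

theorem lemma2p3:
  fixes b :: "nat \<Rightarrow> real" and bb C :: real
  assumes bpos: "\<And>n. b n > 0" and b0: "b 0 = 1"
    and bb1: "bb > 1" and ratio: "\<And>n. b (Suc n) / b n \<ge> bb"
    and Cpos: "C > 0"
  shows "\<forall>\<epsilon>0 > 0. \<exists>\<delta>0 > 0. \<forall>\<delta>. 0 < \<delta> \<and> \<delta> < \<delta>0 \<longrightarrow>
    (\<forall>A :: (real \<times> real) set. \<forall>N :: nat.
       A \<subseteq> {0..1} \<times> {0..1} \<and> real N \<le> C / \<delta> \<and> covered_by_squares A \<delta> N \<longrightarrow>
       (\<exists>\<gamma> Ct. 0 < \<gamma> \<and> \<gamma> < min 1 (1 / bb + \<epsilon>0) \<and> Ct > 0 \<and>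
          (\<forall>\<Theta> :: nat \<Rightarrow> real \<times> real. \<forall>n > 0.
              leb2 (A_n A b \<Theta> n) < Ct * \<gamma> ^ n)))"
proof (intro allI impI)
  fix \<epsilon>0 :: real
  assume "\<epsilon>0 > 0"
  define \<rho> where "\<rho> = 1 / bb"
  define \<beta> where "\<beta> = min ((1 + \<rho>) / 2) (\<rho> + \<epsilon>0 / 2)"
  have "0 < \<rho>" "\<rho> < 1"
    using bb1 by (simp_all add: \<rho>_def)
  then have \<beta>: "\<rho> < \<beta>" "\<beta> \<le> 1" "\<And>\<gamma>. \<gamma> < \<beta> \<Longrightarrow> \<gamma> < min 1 (\<rho> + \<epsilon>0)"
    using \<open>\<epsilon>0 > 0\<close> by (auto simp: \<beta>_def min_less_iff_disj min_le_iff_disj)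
  have "(3::real) > 0"
    by simp
  with uniform_decay[OF bpos b0 bb1 ratio Cpos, of \<beta>] \<beta> show "\<exists>\<delta>0>0. \<forall>\<delta>. 0 < \<delta> \<and> \<delta> < \<delta>0 \<longrightarrow>
    (\<forall>A N. A \<subseteq> {0..1} \<times> {0..1} \<and> real N \<le> C / \<delta> \<and> covered_by_squares A \<delta> N \<longrightarrow>
      (\<exists>\<gamma> Ct. 0 < \<gamma> \<and> \<gamma> < min 1 (1 / bb + \<epsilon>0) \<and> Ct > 0 \<and>
        (\<forall>\<Theta>. \<forall>n>0. leb2 (A_n A b \<Theta> n) < Ct * \<gamma> ^ n)))"
    unfolding \<rho>_def by meson
qed

end
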